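(* Let $G$ be a graph with a perfect ordering $\{B_1,\dots,B_k\}$ of its prime components, with $S_i:=(B_1\cup\dots\cup B_{i-1})\cap B_i$. Let $\alpha>0$ and let $f=\psi_\alpha$ or $f=\phi_\alpha$. Suppose $f[-]$ preserves positivity on $\mathcal{P}_{G_{B_i}}(\mathbb{R})$ for every $i$, and $\alpha\ge|S_i|$ for all $i$. Then $f[-]$ preserves positivity on $\mathcal{P}_G(\mathbb{R})$.
   Context: Graphs are finite and simple; $G_U$ is the subgraph induced on $U$. A decomposition of $G=(V,E)$ is a partition $(A,C,B)$ of $V$ with $A,B$ nonempty such that every path from $A$ to $B$ meets $C$ and $G_C$ is complete; $G$ is prime if it admits no decomposition. Iteratively decomposing $G$ into $G_{A\cup C}$ and $G_{B\cup C}$ until no decomposition is possible yields the prime components of $G$. A sequence of vertex subsets $B_1,\dots,B_k$ with $S_j=(B_1\cup\dots\cup B_{j-1})\cap B_j$ is a perfect ordering if for every $1<i\le k$ there is $j<i$ with $S_i\subset B_j$, and each $S_i$ induces a complete graph. For a graph $H$ on $\{1,\dots,n\}$, $\mathcal{P}_H(\mathbb{R})$ is the set of real symmetric PSD $n\times n$ matrices $M$ with $m_{ij}=0$ for $i\ne j$ non-adjacent. $\psi_\alpha(x)=\mathrm{sgn}(x)|x|^\alpha$, $\phi_\alpha(x)=|x|^\alpha$ ($x\ne 0$), $\psi_\alpha(0)=\phi_\alpha(0)=0$, applied entrywise $f[M]=(f(m_{ij}))$; $f[-]$ preserves positivity on $\mathcal{P}_H(\mathbb{R})$ if $f[M]\in\mathcal{P}_H(\mathbb{R})$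 for all $M\in\mathcal{P}_H(\mathbb{R})$. *)

theory Defs
  imports "HOL-Analysis.Analysis"
begin

text \<open>Induced subgraphs G_U are represented by
  restricting attention to a vertex subset U.\<close>

definition simple_graph :: "nat set \<Rightarrow> (nat \<Rightarrow> nat \<Rightarrow> bool) \<Rightarrow> bool" where
  "simple_graph V E \<longleftrightarrow> finite V \<and> (\<forall>x\<in>V. \<forall>y\<in>V. E x y \<longrightarrow> E y x) \<and> (\<forall>x\<in>V. \<not> E x x)"

definition complete_on :: "(nat \<Rightarrow> nat \<Rightarrow> bool) \<Rightarrow> nat set \<Rightarrow> bool" where
  "complete_on E C \<longleftrightarrow> (\<forall>x\<in>C. \<forall>y\<in>C. x \<noteq> y \<longrightarrow> E x y)"

definition is_path :: "(nat \<Rightarrow> nat \<Rightarrow> bool) \<Rightarrow> nat set \<Rightarrow> nat list \<Rightarrow> bool" where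
  "is_path E U p \<longleftrightarrow> p \<noteq> [] \<and> distinct p \<and> set p \<subseteq> U \<and>
     (\<forall>i. Suc i < length p \<longrightarrow> E (p ! i) (p ! Suc i))"

definition decomposition :: "(nat \<Rightarrow> nat \<Rightarrow> bool) \<Rightarrow> nat set \<Rightarrow> nat set \<Rightarrow> nat set \<Rightarrow> nat set \<Rightarrow> bool" where
  "decomposition E U A C B \<longleftrightarrow>
     A \<union> C \<union> B = U \<and> A \<inter> C = {} \<and> A \<inter> B = {} \<and> C \<inter> B = {} \<and>
     A \<noteq> {} \<and> B \<noteq> {} \<and>
     (\<forall>p. is_path E U p \<and> hd p \<in> A \<and> last p \<in> B \<longrightarrow> set p \<inter> C \<noteq> {}) \<and>
     complete_on E C"

definition prime_graph :: "(nat \<Rightarrow> nat \<Rightarrow> bool) \<Rightarrow> nat set \<Rightarrow> bool" where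
  "prime_graph E U \<longleftrightarrow> \<not> (\<exists>A C B. decomposition E U A C B)"

inductive prime_comps :: "(nat \<Rightarrow> nat \<Rightarrow> bool) \<Rightarrow> nat set \<Rightarrow> nat set set \<Rightarrow> bool"
  for E where
  prime: "prime_graph E U \<Longrightarrow> prime_comps E U {U}"
| decomp: "decomposition E U A C B \<Longrightarrow> prime_comps E (A \<union> C) P1 \<Longrightarrow>
           prime_comps E (B \<union> C) P2 \<Longrightarrow> prime_comps E U (P1 \<union> P2)"

text \<open>Separators of a sequence B_1..B_k (list index i corresponds to B_(i+1)).\<close>
definition sep :: "nat set list \<Rightarrow> nat \<Rightarrow> nat set" where
  "sep Bs i = (\<Union>j<i. Bs ! j) \<inter> Bs ! i"

definition perfect_ordering :: "(nat \<Rightarrow> nat \<Rightarrow> bool) \<Rightarrow> nat set list \<Rightarrow> bool" where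
  "perfect_ordering E Bs \<longleftrightarrow>
     (\<forall>i. 0 < i \<and> i < length Bs \<longrightarrow> (\<exists>j<i. sep Bs i \<subseteq> Bs ! j)) \<and>
     (\<forall>i<length Bs. complete_on E (sep Bs i))"

text \<open>P_{G_U}(R): real symmetric positive semidefinite matrices indexed by U with
  zero entries at non-adjacent distinct pairs (entries outside U are irrelevant).\<close>
definition psd_on :: "nat set \<Rightarrow> (nat \<Rightarrow> nat \<Rightarrow> real) \<Rightarrow> bool" where
  "psd_on U M \<longleftrightarrow> (\<forall>i\<in>U. \<forall>j\<in>U. M i j = M j i) \<and>
     (\<forall>v::nat \<Rightarrow> real. (\<Sum>i\<in>U. \<Sum>j\<in>U. v i * M i j * v j) \<ge> 0)"

definition PG :: "(nat \<Rightarrow> nat \<Rightarrow> bool) \<Rightarrow> nat set \<Rightarrow> (nat \<Rightarrow> nat \<Rightarrow> real) set" where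
  "PG E U = {M. psd_on U M \<and> (\<forall>i\<in>U. \<forall>j\<in>U. i \<noteq> j \<and> \<not> E i j \<longrightarrow> M i j = 0)}"

definition entrywise :: "(real \<Rightarrow> real) \<Rightarrow> (nat \<Rightarrow> nat \<Rightarrow> real) \<Rightarrow> nat \<Rightarrow> nat \<Rightarrow> real" where
  "entrywise f M = (\<lambda>i j. f (M i j))"

definition preserves_positivity :: "(real \<Rightarrow> real) \<Rightarrow> (nat \<Rightarrow> nat \<Rightarrow> bool) \<Rightarrow> nat set \<Rightarrow> bool" where
  "preserves_positivity f E U \<longleftrightarrow> (\<forall>M\<in>PG E U. entrywise f M \<in> PG E U)"

definition psi :: "real \<Rightarrow> real \<Rightarrow> real" where
  "psi \<alpha> x = (if x = 0 then 0 else sgn x * \<bar>x\<bar> powr \<alpha>)"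

definition phi :: "real \<Rightarrow> real \<Rightarrow> real" where
  "phi \<alpha> x = (if x = 0 then 0 else \<bar>x\<bar> powr \<alpha>)"

end

theory Submission
  imports Defs
begin

text \<open>
  Gluing the prime components one at a time along the perfect ordering reduces the claim to a
  single clique sum \<open>X \<union> Y\<close> with complete separator \<open>S = X \<inter> Y\<close>. A matrix \<open>M \<in> P\<^sub>G\<close> splits as
  \<open>M\<^sub>1 + M\<^sub>2\<close> with \<open>M\<^sub>1 \<in> P\<^sub>G\<^sub>X\<close> and \<open>M\<^sub>2 \<in> P\<^sub>G\<^sub>Y\<close>, obtained by peeling off the rows of
  \<open>X - Y\<close> with rank-one deflations. Then \<open>f[M]\<close> is the sum of \<open>f[M\<^sub>1]\<close>, \<open>f[M\<^sub>2]\<close> and the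
  defect \<open>f[M\<^sub>1 + M\<^sub>2] - f[M\<^sub>1] - f[M\<^sub>2]\<close> supported on \<open>S\<close>, and this defect is positive
  semidefinite as soon as \<open>\<alpha> \<ge> |S|\<close>.

  That last fact is FitzGerald and Horn's argument: a difference of entrywise powers is an
  integral of Schur products of a positive semidefinite matrix with entrywise powers of exponent
  \<open>\<alpha> - 1\<close> (the derivative of \<open>\<psi>\<^sub>\<alpha>\<close> is a multiple of \<open>\<phi>\<^sub>\<alpha>\<^sub>-\<^sub>1\<close> and vice versa), so
  induction on the size of the matrix applies.
\<close>

section \<open>Quadratic forms and positive semidefinite matrices\<close>

definition quad_form :: "nat set \<Rightarrow> (nat \<Rightarrow> nat \<Rightarrow> real) \<Rightarrow> (nat \<Rightarrow> real) \<Rightarrow> real" where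
  "quad_form U M v = (\<Sum>i\<in>U. \<Sum>j\<in>U. v i * M i j * v j)"

lemma psd_on_iff:
  "psd_on U M \<longleftrightarrow> (\<forall>i\<in>U. \<forall>j\<in>U. M i j = M j i) \<and> (\<forall>v. 0 \<le> quad_form U M v)"
  by (simp add: psd_on_def quad_form_def)

lemma psd_onI:
  "(\<And>i j. i \<in> U \<Longrightarrow> j \<in> U \<Longrightarrow> M i j = M j i) \<Longrightarrow> (\<And>v. 0 \<le> quad_form U M v) \<Longrightarrow> psd_on U M"
  unfolding psd_on_iff by blast

lemma psd_on_sym: "psd_on U M \<Longrightarrow> i \<in> U \<Longrightarrow> j \<in> U \<Longrightarrow> M i j = M j i"
  unfolding psd_on_def by blast

lemma psd_on_quad_form_nonneg: "psd_on U M \<Longrightarrow> 0 \<le> quad_form U M v"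
  unfolding psd_on_iff by blast

lemma quad_form_add: "quad_form U (\<lambda>i j. M i j + N i j) v = quad_form U M v + quad_form U N v"
  by (simp add: quad_form_def algebra_simps sum.distrib)

lemma quad_form_diff: "quad_form U (\<lambda>i j. M i j - N i j) v = quad_form U M v - quad_form U N v"
  by (simp add: quad_form_def algebra_simps sum_subtractf)

lemma quad_form_scale: "quad_form U (\<lambda>i j. c * M i j) v = c * quad_form U M v"
  by (simp add: quad_form_def sum_distrib_left algebra_simps)

lemma quad_form_cong:
  "(\<And>i j. i \<in> U \<Longrightarrow> j \<in> U \<Longrightarrow> M i j = N i j) \<Longrightarrow> quad_form U M v = quad_form U N v"
  by (simp add: quad_form_def)

lemma quad_form_rank_one: "quad_form U (\<lambda>i j. z i * z j) v = (\<Sum>i\<in>U. v i * z i)\<^sup>2"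
  unfolding quad_form_def power2_eq_square sum_product by (intro sum.cong refl) (simp add: ac_simps)

lemma quad_form_add_vec:
  "quad_form U M (\<lambda>i. v i + w i) = quad_form U M v + quad_form U M w +
     (\<Sum>i\<in>U. \<Sum>j\<in>U. v i * M i j * w j + w i * M i j * v j)"
  by (simp add: quad_form_def algebra_simps sum.distrib)

lemma quad_form_zero_ext_vec:
  assumes "finite U" "X \<subseteq> U"
  shows "quad_form U M (\<lambda>i. if i \<in> X then v i else 0) = quad_form X M v"
proof -
  have "quad_form U M (\<lambda>i. if i \<in> X then v i else 0) =
      (\<Sum>i\<in>X. \<Sum>j\<in>U. (if i \<in> X then v i else 0) * M i j * (if j \<in> X then v j else 0))"
    unfolding quad_form_def by (rule sum.mono_neutral_right) (use assms in auto)
  also have "\<dots> = (\<Sum>i\<in>X. \<Sum>j\<in>X. (if i \<in> X then v i else 0) * M i j * (if j \<in> X then v j else 0))"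
    by (rule sum.cong[OF refl], rule sum.mono_neutral_right) (use assms in auto)
  finally show ?thesis unfolding quad_form_def by simp
qed

lemma quad_form_zero_ext:
  assumes "finite U" "X \<subseteq> U"
  shows "quad_form U (\<lambda>i j. if i \<in> X \<and> j \<in> X then N i j else 0) v = quad_form X N v"
proof -
  have "quad_form U (\<lambda>i j. if i \<in> X \<and> j \<in> X then N i j else 0) v =
      (\<Sum>i\<in>X. \<Sum>j\<in>U. v i * (if i \<in> X \<and> j \<in> X then N i j else 0) * v j)"
    unfolding quad_form_def by (rule sum.mono_neutral_right) (use assms in auto)
  also have "\<dots> = (\<Sum>i\<in>X. \<Sum>j\<in>X. v i * (if i \<in> X \<and> j \<in> X then N i j else 0) * v j)"
    by (rule sum.cong[OF refl], rule sum.mono_neutral_right) (use assms in auto)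
  also have "\<dots> = quad_form X N v"
    unfolding quad_form_def by (rule sum.cong[OF refl], rule sum.cong) auto
  finally show ?thesis .
qed

lemma quad_form_remove:
  assumes "finite U" "k \<in> U" "\<And>j. j \<in> U \<Longrightarrow> D k j = 0" "\<And>j. j \<in> U \<Longrightarrow> D j k = 0"
  shows "quad_form U D v = quad_form (U - {k}) D v"
proof -
  have "quad_form U D v = quad_form U (\<lambda>i j. if i \<in> U - {k} \<and> j \<in> U - {k} then D i j else 0) v"
    by (rule quad_form_cong) (use assms in auto)
  also have "\<dots> = quad_form (U - {k}) D v"
    by (rule quad_form_zero_ext) (use assms in auto)
  finally show ?thesis .
qed

lemma quad_form_unit:
  assumes "finite U" "k \<in> U"
  shows "quad_form U M (\<lambda>i. if i = k then 1 else 0) = M k k"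
  using quad_form_zero_ext_vec[of U "{k}" M "\<lambda>i. if i = k then 1 else 0"] assms
  by (simp add: quad_form_def if_distrib cong: if_cong)

lemma quad_form_two:
  assumes "finite U" "p \<in> U" "q \<in> U" "p \<noteq> q"
  shows "quad_form U M (\<lambda>i. if i = p then s else if i = q then r else 0) =
     s * s * M p p + s * r * M p q + r * s * M q p + r * r * M q q"
proof -
  define w where "w i = (if i = p then s else if i = q then r else 0)" for i
  have "(\<lambda>i. if i \<in> {p, q} then w i else 0) = w" by (auto simp: w_def)
  then have "quad_form U M w = quad_form {p, q} M w"
    using quad_form_zero_ext_vec[of U "{p, q}" M w] assms by simp
  also have "\<dots> = s * s * M p p + s * r * M p q + r * s * M q p + r * r * M q q"
    using assms(4) by (simp add: quad_form_def w_def algebra_simps)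
  finally show ?thesis unfolding w_def .
qed

lemma psd_on_empty: "psd_on {} M"
  by (simp add: psd_on_def)

lemma psd_on_subset:
  assumes "finite U" "X \<subseteq> U" "psd_on U M"
  shows "psd_on X M"
proof (rule psd_onI)
  show "M i j = M j i" if "i \<in> X" "j \<in> X" for i j
    using that assms by (auto intro: psd_on_sym)
  show "0 \<le> quad_form X M v" for v
    using quad_form_zero_ext_vec[OF assms(1,2)] psd_on_quad_form_nonneg[OF assms(3)] by metis
qed

lemma psd_on_add: "psd_on U M \<Longrightarrow> psd_on U N \<Longrightarrow> psd_on U (\<lambda>i j. M i j + N i j)"
  unfolding psd_on_iff quad_form_add by auto

lemma psd_on_scale: "psd_on U M \<Longrightarrow> 0 \<le> c \<Longrightarrow> psd_on U (\<lambda>i j. c * M i j)"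
  unfolding psd_on_iff quad_form_scale by auto

lemma psd_on_rank_one: "psd_on U (\<lambda>i j. z i * z j)"
  unfolding psd_on_iff quad_form_rank_one by auto

lemma psd_on_diag_nonneg: "finite U \<Longrightarrow> psd_on U M \<Longrightarrow> k \<in> U \<Longrightarrow> 0 \<le> M k k"
  using quad_form_unit[of U k M] psd_on_quad_form_nonneg by metis

lemma psd_on_zero_diag_row:
  assumes "finite U" "psd_on U M" "k \<in> U" "j \<in> U" "M k k = 0"
  shows "M k j = 0"
proof (cases "j = k")
  case True
  with assms show ?thesis by simp
next
  case False
  have sym: "M j k = M k j" using psd_on_sym assms by metis
  have line: "0 \<le> 2 * t * M k j + M j j" for t
  proof -
    have "0 \<le> quad_form U M (\<lambda>i. if i = k then t else if i = j then 1 else 0)"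
      using assms psd_on_quad_form_nonneg by blast
    also have "\<dots> = t * t * M k k + t * 1 * M k j + 1 * t * M j k + 1 * 1 * M j j"
      by (rule quad_form_two) (use assms False in auto)
    finally show ?thesis using assms sym by simp
  qed
  show ?thesis
  proof (rule ccontr)
    assume "M k j \<noteq> 0"
    then have "2 * (-(M j j + 1) / (2 * M k j)) * M k j + M j j = -1"
      by (simp add: field_simps)
    with line show False by (metis neg_0_le_iff_le not_one_le_zero)
  qed
qed

lemma psd_on_det2:
  assumes "finite U" "psd_on U A" "p \<in> U" "q \<in> U" "p \<noteq> q"
  shows "A p q * A p q \<le> A p p * A q q"
proof -
  have sym: "A q p = A p q" using psd_on_sym[OF assms(2)] assms(3,4) by simp
  have a0: "0 \<le> A p p" and d0: "0 \<le> A q q"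
    using psd_on_diag_nonneg[OF assms(1,2)] assms(3,4) by simp_all
  show ?thesis
  proof (cases "A p p = 0")
    case True
    then have "A p q = 0" using psd_on_zero_diag_row[OF assms(1,2,3,4)] by simp
    then show ?thesis using a0 d0 by simp
  next
    case False
    have "0 \<le> quad_form U A (\<lambda>i. if i = p then A p q else if i = q then - A p p else 0)"
      using assms(2) psd_on_quad_form_nonneg by blast
    also have "\<dots> = A p q * A p q * A p p + A p q * (- A p p) * A p q
        + (- A p p) * A p q * A q p + (- A p p) * (- A p p) * A q q"
      by (rule quad_form_two) (use assms in auto)
    also have "\<dots> = A p p * (A p p * A q q - A p q * A p q)"
      by (simp only: sym) algebra
    finally show ?thesis using False a0 by (simp add: zero_le_mult_iff)
  qed
qed

lemma psd_on_card_le_2I: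
  assumes "finite U" "card U \<le> 2"
    and sym: "\<And>i j. i \<in> U \<Longrightarrow> j \<in> U \<Longrightarrow> A i j = A j i"
    and diag: "\<And>i. i \<in> U \<Longrightarrow> 0 \<le> A i i"
    and det: "\<And>i j. i \<in> U \<Longrightarrow> j \<in> U \<Longrightarrow> i \<noteq> j \<Longrightarrow> A i j * A i j \<le> A i i * A j j"
  shows "psd_on U A"
proof (rule psd_onI)
  show "A i j = A j i" if "i \<in> U" "j \<in> U" for i j using sym that .
  fix v
  consider "U = {}" | p where "U = {p}" | p q where "U = {p, q}" "p \<noteq> q"
  proof -
    have "card U = 0 \<or> card U = 1 \<or> card U = 2" using assms(2) by linarith
    then show ?thesis using that assms(1) by (auto simp: card_1_singleton_iff card_2_iff)
  qed
  then show "0 \<le> quad_form U A v"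
  proof cases
    case 1
    then show ?thesis by (simp add: quad_form_def)
  next
    case (2 p)
    have "0 \<le> A p p * (v p * v p)" using diag[of p] 2 by simp
    then show ?thesis using 2 by (simp add: quad_form_def ac_simps)
  next
    case (3 p q)
    let ?a = "A p p" and ?c = "A p q" and ?d = "A q q"
    have a: "0 \<le> ?a" and d: "0 \<le> ?d" and cd: "?c * ?c \<le> ?a * ?d"
      using diag det[of p q] 3 by simp_all
    have "0 \<le> v p * ?a * v p + v p * ?c * v q + v q * ?c * v p + v q * ?d * v q"
    proof (cases "?a = 0")
      case True
      with cd have "?c * ?c = 0" using zero_le_square[of ?c] by simp
      then have "?c = 0" by simp
      with True show ?thesis using mult_nonneg_nonneg[OF d zero_le_square[of "v q"]] by (simp add: ac_simps)
    next
      case False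
      have "?a * (v p * ?a * v p + v p * ?c * v q + v q * ?c * v p + v q * ?d * v q) =
          (?a * v p + ?c * v q)\<^sup>2 + (?a * ?d - ?c * ?c) * (v q)\<^sup>2"
        by (simp add: power2_eq_square algebra_simps)
      also have "0 \<le> \<dots>" using cd by simp
      finally show ?thesis using False a by (simp add: zero_le_mult_iff)
    qed
    then show ?thesis using 3 sym[of q p] by (simp add: quad_form_def)
  qed
qed

lemma sum_mult_unit:
  fixes c :: "nat \<Rightarrow> real"
  shows "finite U \<Longrightarrow> k \<in> U \<Longrightarrow> (\<Sum>j\<in>U. c j * (if j = k then t else 0)) = c k * t"
  by (simp add: if_distrib[where f="\<lambda>x. _ * x"] cong: if_cong)

lemma quad_form_add_unit:
  assumes "finite U" "k \<in> U" "\<And>i. i \<in> U \<Longrightarrow> A k i = A i k"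
  shows "quad_form U A (\<lambda>i. v i + (if i = k then t else 0)) =
    quad_form U A v + 2 * t * (\<Sum>i\<in>U. v i * A i k) + t\<^sup>2 * A k k"
proof -
  define e where "e i = (if i = k then t else 0)" for i
  have left: "(\<Sum>j\<in>U. w i * A i j * e j) = w i * A i k * t" for w i
    unfolding e_def by (rule sum_mult_unit[OF assms(1,2)])
  have right: "(\<Sum>i\<in>U. e i * A i j * v j) = v j * A j k * t" if "j \<in> U" for j
  proof -
    have "(\<Sum>i\<in>U. e i * A i j * v j) = (\<Sum>i\<in>U. (A i j * v j) * e i)"
      by (simp add: ac_simps)
    also have "\<dots> = A k j * v j * t"
      unfolding e_def by (rule sum_mult_unit[OF assms(1,2)])
    finally show ?thesis using assms(3)[OF that] by simp
  qed
  have "(\<Sum>i\<in>U. \<Sum>j\<in>U. v i * A i j * e j + e i * A i j * v j) =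
      (\<Sum>i\<in>U. v i * A i k * t) + (\<Sum>j\<in>U. \<Sum>i\<in>U. e i * A i j * v j)"
    unfolding sum.distrib left by (subst sum.swap) (rule refl)
  also have "(\<Sum>j\<in>U. \<Sum>i\<in>U. e i * A i j * v j) = (\<Sum>j\<in>U. v j * A j k * t)"
    by (intro sum.cong refl right)
  finally have cross: "(\<Sum>i\<in>U. \<Sum>j\<in>U. v i * A i j * e j + e i * A i j * v j) =
      2 * t * (\<Sum>i\<in>U. v i * A i k)"
    by (simp add: sum_distrib_left sum_distrib_right mult_ac)
  have "quad_form U A e = (\<Sum>i\<in>U. (A i k * t) * e i)"
    unfolding quad_form_def left by (simp add: mult_ac)
  also have "\<dots> = t\<^sup>2 * A k k"
    unfolding e_def sum_mult_unit[OF assms(1,2)] by (simp add: power2_eq_square)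
  finally show ?thesis
    using cross unfolding e_def[symmetric] quad_form_add_vec by simp
qed

lemma psd_on_schur_complement:
  assumes "finite U" "k \<in> U" "psd_on U A" "0 < A k k"
  shows "psd_on U (\<lambda>i j. A i j - A i k * A j k / A k k)"
proof (rule psd_onI)
  have sym: "\<And>i j. i \<in> U \<Longrightarrow> j \<in> U \<Longrightarrow> A i j = A j i"
    using psd_on_sym[OF assms(3)] by blast
  show "A i j - A i k * A j k / A k k = A j i - A j k * A i k / A k k" if "i \<in> U" "j \<in> U" for i j
    using sym that by (simp add: mult.commute)
  fix v
  define s where "s = (\<Sum>i\<in>U. v i * A i k)"
  \<comment> \<open>Complete the square along the pivot coordinate.\<close>
  have "0 \<le> quad_form U A (\<lambda>i. v i + (if i = k then - s / A k k else 0))"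
    by (rule psd_on_quad_form_nonneg[OF assms(3)])
  also have "\<dots> = quad_form U A v - s\<^sup>2 / A k k"
    using assms(4) sym assms(1,2)
    by (subst quad_form_add_unit) (auto simp: s_def power2_eq_square field_simps)
  also have "s\<^sup>2 / A k k = quad_form U (\<lambda>i j. A i k * A j k / A k k) v"
  proof -
    have "quad_form U (\<lambda>i j. A i k * A j k / A k k) v = quad_form U (\<lambda>i j. A i k * A j k) v / A k k"
      using quad_form_scale[of U "1 / A k k" "\<lambda>i j. A i k * A j k" v] by simp
    then show ?thesis by (simp add: quad_form_rank_one s_def)
  qed
  finally show "0 \<le> quad_form U (\<lambda>i j. A i j - A i k * A j k / A k k) v"
    by (simp add: quad_form_diff)
qed

section \<open>Deflation and the Schur product theorem\<close>

lemma psd_on_deflate: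
  assumes "finite U" "k \<in> U" "psd_on U A"
  obtains z where "psd_on U (\<lambda>i j. A i j - z i * z j)"
    and "\<And>j. j \<in> U \<Longrightarrow> A k j = z k * z j"
    and "\<And>j. j \<in> U \<Longrightarrow> A j k = 0 \<Longrightarrow> z j = 0"
proof (cases "A k k = 0")
  case True
  then have "A k j = 0" if "j \<in> U" for j
    using psd_on_zero_diag_row[OF assms(1,3,2)] that by blast
  with that[of "\<lambda>_. 0"] assms(3) show ?thesis by simp
next
  case False
  then have pos: "0 < A k k" using psd_on_diag_nonneg[OF assms(1,3,2)] by simp
  define z where "z j = A j k / sqrt (A k k)" for j
  have zz: "z i * z j = A i k * A j k / A k k" for i j
    using pos by (simp add: z_def)
  show ?thesis
  proof (rule that)
    show "psd_on U (\<lambda>i j. A i j - z i * z j)"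
      unfolding zz by (rule psd_on_schur_complement[OF assms pos])
    show "A k j = z k * z j" if "j \<in> U" for j
      using pos psd_on_sym[OF assms(3) assms(2) that] by (simp add: zz)
    show "z j = 0" if "A j k = 0" for j
      using that by (simp add: z_def)
  qed
qed

lemma psd_on_insert_zero:
  assumes "finite U" "k \<notin> U" "psd_on U D"
    and "\<And>j. j \<in> insert k U \<Longrightarrow> D k j = 0" "\<And>j. j \<in> insert k U \<Longrightarrow> D j k = 0"
  shows "psd_on (insert k U) D"
proof (rule psd_onI)
  show "D i j = D j i" if "i \<in> insert k U" "j \<in> insert k U" for i j
    using that assms(4,5) psd_on_sym[OF assms(3)] by auto
  have "quad_form (insert k U) D v = quad_form (insert k U - {k}) D v" for v
    by (rule quad_form_remove) (use assms in auto)
  then show "0 \<le> quad_form (insert k U) D v" for v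
    using assms(2) psd_on_quad_form_nonneg[OF assms(3)] by simp
qed

lemma psd_on_mult_rank_one: "psd_on U A \<Longrightarrow> psd_on U (\<lambda>i j. A i j * (z i * z j))"
proof (rule psd_onI)
  show "A i j * (z i * z j) = A j i * (z j * z i)" if "psd_on U A" "i \<in> U" "j \<in> U" for i j
    using psd_on_sym[OF that] by simp
  have "quad_form U (\<lambda>i j. A i j * (z i * z j)) v = quad_form U A (\<lambda>i. v i * z i)" for v
    unfolding quad_form_def by (intro sum.cong refl) (simp add: ac_simps)
  then show "0 \<le> quad_form U (\<lambda>i j. A i j * (z i * z j)) v" if "psd_on U A" for v
    using psd_on_quad_form_nonneg[OF that] by simp
qed

theorem psd_on_schur_product:
  assumes "finite U" "psd_on U A" "psd_on U B"
  shows "psd_on U (\<lambda>i j. A i j * B i j)"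
  using assms
proof (induction U arbitrary: B rule: finite_induct)
  case empty
  show ?case by (rule psd_on_empty)
next
  case (insert k F)
  let ?U = "insert k F"
  have fin: "finite ?U" using insert.hyps by simp
  obtain z where Rpsd: "psd_on ?U (\<lambda>i j. B i j - z i * z j)"
    and row: "\<And>j. j \<in> ?U \<Longrightarrow> B k j = z k * z j"
    using psd_on_deflate[OF fin _ insert.prems(2)] by blast
  define R where "R i j = B i j - z i * z j" for i j
  have Rk: "R k j = 0" "R j k = 0" if "j \<in> ?U" for j
    using row[OF that] psd_on_sym[OF Rpsd that, of k] by (simp_all add: R_def)
  have "psd_on F A" by (rule psd_on_subset[OF fin _ insert.prems(1)]) blast
  moreover have "psd_on F R" unfolding R_def by (rule psd_on_subset[OF fin _ Rpsd]) blast
  ultimately have "psd_on F (\<lambda>i j. A i j * R i j)" by (rule insert.IH)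
  then have "psd_on ?U (\<lambda>i j. A i j * R i j)"
    by (rule psd_on_insert_zero[OF insert.hyps]) (simp_all add: Rk)
  then have "psd_on ?U (\<lambda>i j. A i j * (z i * z j) + A i j * R i j)"
    by (rule psd_on_add[OF psd_on_mult_rank_one[OF insert.prems(1)]])
  then show ?case by (simp add: R_def algebra_simps)
qed

lemma psd_on_split_rows:
  assumes "finite U" "psd_on U M" "K \<subseteq> U" "Y \<subseteq> U" "K \<inter> Y = {}"
    and "\<And>i j. i \<in> K \<Longrightarrow> j \<in> Y \<Longrightarrow> M i j = 0"
  obtains M1 where "psd_on U M1" and "psd_on U (\<lambda>i j. M i j - M1 i j)"
    and "\<And>i j. i \<in> K \<Longrightarrow> j \<in> U \<Longrightarrow> M1 i j = M i j"
    and "\<And>i j. i \<in> Y \<Longrightarrow> j \<in> U \<Longrightarrow> M1 i j = 0"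
proof -
  have "finite K" using assms(1,3) finite_subset by blast
  \<comment> \<open>Peel off the rows of \<open>K\<close> one at a time by deflation; as \<open>M\<close> vanishes on \<open>K \<times> Y\<close>,
    the rank-one pieces removed never touch \<open>Y\<close>.\<close>
  then have "\<exists>M1. psd_on U M1 \<and> psd_on U (\<lambda>i j. M i j - M1 i j) \<and>
      (\<forall>i\<in>K. \<forall>j\<in>U. M1 i j = M i j) \<and> (\<forall>i\<in>Y. \<forall>j\<in>U. M1 i j = 0)"
    using assms(3,5,6)
  proof (induction K rule: finite_induct)
    case empty
    show ?case by (rule exI[of _ "\<lambda>_ _. 0"]) (use assms(2) in \<open>simp add: psd_on_def\<close>)
  next
    case (insert k K)
    then obtain M1 where M1: "psd_on U M1" and R: "psd_on U (\<lambda>i j. M i j - M1 i j)"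
      and onK: "\<forall>i\<in>K. \<forall>j\<in>U. M1 i j = M i j" and onY: "\<forall>i\<in>Y. \<forall>j\<in>U. M1 i j = 0"
      by auto
    have k: "k \<in> U" using insert.prems by simp
    obtain z where z1: "psd_on U (\<lambda>i j. (M i j - M1 i j) - z i * z j)"
      and z2: "\<And>j. j \<in> U \<Longrightarrow> M k j - M1 k j = z k * z j"
      and z3: "\<And>j. j \<in> U \<Longrightarrow> M j k - M1 j k = 0 \<Longrightarrow> z j = 0"
      using psd_on_deflate[OF assms(1) k R] by blast
    have zK: "z i = 0" if "i \<in> K" for i
      using z3 onK that insert.prems(1) k by auto
    have zY: "z i = 0" if "i \<in> Y" for i
    proof -
      have "i \<in> U" using that assms(4) by blast
      then have "M i k = M k i" using psd_on_sym[OF assms(2)] k by blast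
      then show ?thesis using z3 onY that insert.prems \<open>i \<in> U\<close> by auto
    qed
    show ?case
    proof (intro exI[of _ "\<lambda>i j. M1 i j + z i * z j"] conjI ballI)
      show "psd_on U (\<lambda>i j. M1 i j + z i * z j)" by (rule psd_on_add[OF M1 psd_on_rank_one])
      show "psd_on U (\<lambda>i j. M i j - (M1 i j + z i * z j))" using z1 by (simp add: diff_diff_eq)
      show "M1 i j + z i * z j = M i j" if "i \<in> insert k K" "j \<in> U" for i j
        using that z2[of j] onK zK by (cases "i = k") (auto simp: algebra_simps)
      show "M1 i j + z i * z j = 0" if "i \<in> Y" "j \<in> U" for i j
        using that onY zY by simp
    qed
  qed
  with that show ?thesis by blast
qed

section \<open>Entrywise powers\<close>

text \<open>\<open>gpow True \<alpha>\<close> is \<open>\<psi>\<^sub>\<alpha>\<close> and \<open>gpow False \<alpha>\<close> is \<open>\<phi>\<^sub>\<alpha>\<close>; the flag flips under differentiation.\<close>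

definition gpow :: "bool \<Rightarrow> real \<Rightarrow> real \<Rightarrow> real" where
  "gpow signed \<beta> x = (if signed then sgn x else 1) * \<bar>x\<bar> powr \<beta>"

lemma gpow_0 [simp]: "gpow signed \<beta> 0 = 0"
  by (simp add: gpow_def)

lemma gpow_nonneg: "0 \<le> x \<Longrightarrow> gpow signed \<beta> x = x powr \<beta>"
  by (cases "x = 0") (auto simp: gpow_def)

lemma gpow_mult: "gpow signed \<beta> (x * y) = gpow signed \<beta> x * gpow signed \<beta> y"
  by (simp add: gpow_def abs_mult powr_mult sgn_mult)

lemma abs_gpow: "\<bar>gpow signed \<beta> x\<bar> = \<bar>x\<bar> powr \<beta>"
  by (cases "x = 0") (auto simp: gpow_def abs_mult abs_sgn_eq)

lemma psi_eq_gpow: "psi \<alpha> = gpow True \<alpha>"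
  by (rule ext) (simp add: psi_def gpow_def)

lemma phi_eq_gpow: "phi \<alpha> = gpow False \<alpha>"
  by (rule ext) (simp add: phi_def gpow_def)

lemma gpow_has_real_derivative:
  assumes "x \<noteq> 0"
  shows "(gpow signed \<beta> has_real_derivative \<beta> * gpow (\<not> signed) (\<beta> - 1) x) (at x)"
proof (cases "0 < x")
  case True
  have "((\<lambda>t. t powr \<beta>) has_real_derivative \<beta> * x powr (\<beta> - 1)) (at x)"
    using True by (intro has_real_derivative_powr) simp_all
  then have "((\<lambda>t. t powr \<beta>) has_real_derivative \<beta> * gpow (\<not> signed) (\<beta> - 1) x) (at x)"
    using True by (simp add: gpow_nonneg)
  then show ?thesis
    by (rule has_field_derivative_transform_within_open[OF _ open_greaterThan[of 0]])
      (use True in \<open>simp_all add: gpow_nonneg\<close>)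
next
  case False
  with assms have neg: "x < 0" by simp
  define c :: real where "c = (if signed then -1 else 1)"
  have "((\<lambda>t. c * (- t) powr \<beta>) has_real_derivative c * (\<beta> * (- x) powr (\<beta> - of_nat 1) * (-1))) (at x)"
    by (intro DERIV_cmult DERIV_fun_powr) (use neg in \<open>auto intro!: derivative_eq_intros\<close>)
  also have "c * (\<beta> * (- x) powr (\<beta> - of_nat 1) * (-1)) = \<beta> * gpow (\<not> signed) (\<beta> - 1) x"
    using neg by (simp add: gpow_def c_def)
  finally show ?thesis
    by (rule has_field_derivative_transform_within_open[OF _ open_lessThan[of 0]])
      (use neg in \<open>simp_all add: gpow_def c_def\<close>)
qed

lemma isCont_gpow:
  assumes "0 < \<beta>"
  shows "isCont (gpow signed \<beta>) x"
proof (cases "x = 0")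
  case False
  then show ?thesis using gpow_has_real_derivative DERIV_isCont by blast
next
  case True
  have "((\<lambda>t. \<bar>t\<bar> powr \<beta>) \<longlongrightarrow> 0 powr \<beta>) (at 0)"
    by (rule tendsto_powr') (use assms in \<open>auto intro!: tendsto_eq_intros\<close>)
  then have "((\<lambda>t. \<bar>gpow signed \<beta> t\<bar>) \<longlongrightarrow> 0) (at 0)"
    using assms by (simp add: abs_gpow)
  then show ?thesis
    using True by (simp add: isCont_def tendsto_rabs_zero_iff)
qed

lemma gpow_add_has_integral:
  assumes "1 \<le> \<beta>"
  shows "((\<lambda>l. d * (\<beta> * gpow (\<not> signed) (\<beta> - 1) (y + l * d)))
    has_integral (gpow signed \<beta> (y + d) - gpow signed \<beta> y)) {0..1}"
proof (cases "d = 0")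
  case True
  then show ?thesis by simp
next
  case False
  define f where "f l = gpow signed \<beta> (y + l * d)" for l
  \<comment> \<open>The segment from \<open>y\<close> to \<open>y + d\<close> meets the only non-differentiable point \<open>0\<close> at most once.\<close>
  have "((\<lambda>l. d * (\<beta> * gpow (\<not> signed) (\<beta> - 1) (y + l * d))) has_integral (f 1 - f 0)) {0..1}"
  proof (rule fundamental_theorem_of_calculus_interior_strong[of "{- y / d}"])
    fix l assume l: "l \<in> {0<..<1} - {- y / d}"
    then have "y + l * d \<noteq> 0"
      using False by (auto simp: field_simps)
    moreover have "((\<lambda>l. y + l * d) has_real_derivative d) (at l)"
      by (auto intro!: derivative_eq_intros)
    ultimately have "(f has_real_derivative \<beta> * gpow (\<not> signed) (\<beta> - 1) (y + l * d) * d) (at l)"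
      unfolding f_def by (rule DERIV_chain2[OF gpow_has_real_derivative])
    then show "(f has_vector_derivative d * (\<beta> * gpow (\<not> signed) (\<beta> - 1) (y + l * d))) (at l)"
      by (simp add: has_real_derivative_iff_has_vector_derivative[symmetric] mult.commute)
  next
    have "isCont f l" for l
      unfolding f_def by (rule isCont_o2[OF _ isCont_gpow]) (use assms in \<open>auto intro: continuous_intros\<close>)
    then show "continuous_on {0..1} f"
      by (simp add: continuous_at_imp_continuous_on)
  qed simp_all
  then show ?thesis by (simp add: f_def add.commute)
qed

section \<open>Entrywise powers of positive semidefinite matrices\<close>

lemma quad_form_nonneg_integral_schur_product:
  assumes "finite X" "psd_on X B" "\<And>l. l \<in> {0..1} \<Longrightarrow> psd_on X (H l)"
    and "\<And>i j. i \<in> X \<Longrightarrow> j \<in> X \<Longrightarrow> ((\<lambda>l. B i j * H l i j) has_integral I i j) {0..1::real}"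
  shows "0 \<le> quad_form X I v"
proof -
  have "((\<lambda>l. quad_form X (\<lambda>i j. B i j * H l i j) v) has_integral quad_form X I v) {0..1}"
    unfolding quad_form_def
    by (intro has_integral_sum assms(1) has_integral_mult_left has_integral_mult_right assms(4))
  then show ?thesis
    by (rule has_integral_nonneg)
      (simp add: psd_on_quad_form_nonneg psd_on_schur_product[OF assms(1,2,3)])
qed

lemma psd_on_gpow_add_diff:
  assumes "finite X" "1 \<le> \<beta>" "psd_on X B" "\<And>i j. i \<in> X \<Longrightarrow> j \<in> X \<Longrightarrow> C i j = C j i"
    and "\<And>l. l \<in> {0..1} \<Longrightarrow> psd_on X (\<lambda>i j. gpow (\<not> signed) (\<beta> - 1) (C i j + l * B i j))"
  shows "psd_on X (\<lambda>i j. gpow signed \<beta> (C i j + B i j) - gpow signed \<beta> (C i j))"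
proof (rule psd_onI)
  show "gpow signed \<beta> (C i j + B i j) - gpow signed \<beta> (C i j) =
      gpow signed \<beta> (C j i + B j i) - gpow signed \<beta> (C j i)" if "i \<in> X" "j \<in> X" for i j
    using assms(4) psd_on_sym[OF assms(3)] that by simp
  show "0 \<le> quad_form X (\<lambda>i j. gpow signed \<beta> (C i j + B i j) - gpow signed \<beta> (C i j)) v" for v
  proof (rule quad_form_nonneg_integral_schur_product[OF assms(1,3)])
    show "psd_on X (\<lambda>i j. \<beta> * gpow (\<not> signed) (\<beta> - 1) (C i j + l * B i j))" if "l \<in> {0..1}" for l
      using psd_on_scale[OF assms(5)[OF that]] assms(2) by simp
    show "((\<lambda>l. B i j * (\<beta> * gpow (\<not> signed) (\<beta> - 1) (C i j + l * B i j))) has_integral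
        gpow signed \<beta> (C i j + B i j) - gpow signed \<beta> (C i j)) {0..1}" for i j
      by (rule gpow_add_has_integral[OF assms(2)])
  qed
qed

lemma psd_on_gpow_card_le_2:
  assumes "finite U" "card U \<le> 2" "psd_on U A" "0 \<le> \<beta>"
  shows "psd_on U (\<lambda>i j. gpow signed \<beta> (A i j))"
proof (rule psd_on_card_le_2I[OF assms(1,2)])
  show "gpow signed \<beta> (A i j) = gpow signed \<beta> (A j i)" if "i \<in> U" "j \<in> U" for i j
    using psd_on_sym[OF assms(3) that] by simp
  show "0 \<le> gpow signed \<beta> (A i i)" if "i \<in> U" for i
    using psd_on_diag_nonneg[OF assms(1,3) that] by (simp add: gpow_nonneg)
  fix i j assume ij: "i \<in> U" "j \<in> U" "i \<noteq> j"
  have a: "0 \<le> A i i" "0 \<le> A j j" using psd_on_diag_nonneg[OF assms(1,3)] ij by auto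
  have "gpow signed \<beta> (A i j) * gpow signed \<beta> (A i j) =
      \<bar>gpow signed \<beta> (A i j)\<bar> * \<bar>gpow signed \<beta> (A i j)\<bar>"
    by (simp add: abs_mult_self_eq)
  also have "\<dots> = (\<bar>A i j\<bar> * \<bar>A i j\<bar>) powr \<beta>"
    by (subst powr_mult) (simp_all add: abs_gpow)
  also have "\<dots> = (A i j * A i j) powr \<beta>"
    by (simp add: abs_mult_self_eq)
  also have "\<dots> \<le> (A i i * A j j) powr \<beta>"
    using psd_on_det2[OF assms(1,3) ij] assms(4) by (intro powr_mono2) simp_all
  also have "\<dots> = gpow signed \<beta> (A i i) * gpow signed \<beta> (A j j)"
    using a by (simp add: gpow_nonneg powr_mult)
  finally show "gpow signed \<beta> (A i j) * gpow signed \<beta> (A i j) \<le>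
      gpow signed \<beta> (A i i) * gpow signed \<beta> (A j j)" .
qed

theorem psd_on_gpow:
  assumes "finite U" "psd_on U A" "0 \<le> \<beta>" "real (card U) \<le> \<beta> + 2"
  shows "psd_on U (\<lambda>i j. gpow signed \<beta> (A i j))"
  using assms
proof (induction U arbitrary: A \<beta> signed rule: finite_induct)
  case empty
  show ?case by (rule psd_on_empty)
next
  case (insert k F)
  let ?U = "insert k F"
  have fin: "finite ?U" using insert.hyps by simp
  show ?case
  proof (cases "\<beta> < 1")
    case True
    then have "card ?U \<le> 2" using insert.prems(3) by linarith
    then show ?thesis by (rule psd_on_gpow_card_le_2[OF fin _ insert.prems(1,2)])
  next
    case False
    obtain z where Rpsd: "psd_on ?U (\<lambda>i j. A i j - z i * z j)"
      and row: "\<And>j. j \<in> ?U \<Longrightarrow> A k j = z k * z j"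
      using psd_on_deflate[OF fin _ insert.prems(1)] by blast
    define Z where "Z i j = z i * z j" for i j
    define R where "R i j = A i j - Z i j" for i j
    define D where "D i j = gpow signed \<beta> (Z i j + R i j) - gpow signed \<beta> (Z i j)" for i j
    have Dk: "D k j = 0" "D j k = 0" if "j \<in> ?U" for j
      using row[OF that] psd_on_sym[OF insert.prems(1) that, of k] by (simp_all add: D_def R_def Z_def)
    \<comment> \<open>\<open>D\<close> is an integral of Schur products of \<open>R\<close> with entrywise powers of exponent \<open>\<beta> - 1\<close>
      of the matrices \<open>Z + l R\<close>, which are positive by induction.\<close>
    have "psd_on F D" unfolding D_def
    proof (rule psd_on_gpow_add_diff[OF insert.hyps(1)])
      show "1 \<le> \<beta>" using False by simp
      show "psd_on F R" unfolding R_def Z_def by (rule psd_on_subset[OF fin _ Rpsd]) blast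
      show "Z i j = Z j i" for i j by (simp add: Z_def)
      fix l :: real assume "l \<in> {0..1}"
      then have "psd_on ?U (\<lambda>i j. Z i j + l * R i j)"
        unfolding Z_def R_def by (intro psd_on_add psd_on_rank_one psd_on_scale[OF Rpsd]) simp
      then have "psd_on F (\<lambda>i j. Z i j + l * R i j)" by (rule psd_on_subset[OF fin, rotated]) blast
      then show "psd_on F (\<lambda>i j. gpow (\<not> signed) (\<beta> - 1) (Z i j + l * R i j))"
        by (rule insert.IH) (use False insert.prems(3) insert.hyps in simp_all)
    qed
    then have "psd_on ?U D"
      by (rule psd_on_insert_zero[OF insert.hyps]) (simp_all add: Dk)
    then have "psd_on ?U (\<lambda>i j. gpow signed \<beta> (z i) * gpow signed \<beta> (z j) + D i j)"
      by (rule psd_on_add[OF psd_on_rank_one])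
    then show ?thesis by (simp add: D_def R_def Z_def gpow_mult)
  qed
qed

lemma psd_on_gpow_mono:
  assumes "finite U" "psd_on U B" "psd_on U (\<lambda>i j. A i j - B i j)" "0 \<le> \<gamma>"
    and "real (card U) \<le> \<gamma> + 1"
  shows "psd_on U (\<lambda>i j. gpow signed \<gamma> (A i j) - gpow signed \<gamma> (B i j))"
proof (cases "\<gamma> < 1")
  case True
  then have card: "card U \<le> 1" using assms(5) by linarith
  show ?thesis
  proof (rule psd_on_card_le_2I[OF assms(1)])
    show "card U \<le> 2" using card by simp
    show "gpow signed \<gamma> (A i j) - gpow signed \<gamma> (B i j) = gpow signed \<gamma> (A j i) - gpow signed \<gamma> (B j i)"
      if "i \<in> U" "j \<in> U" for i j
      using psd_on_sym[OF assms(2) that] psd_on_sym[OF assms(3) that] by simp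
    show "0 \<le> gpow signed \<gamma> (A i i) - gpow signed \<gamma> (B i i)" if "i \<in> U" for i
    proof -
      have "0 \<le> B i i" "B i i \<le> A i i"
        using psd_on_diag_nonneg[OF assms(1,2) that] psd_on_diag_nonneg[OF assms(1,3) that] by simp_all
      then show ?thesis using assms(4) by (simp add: gpow_nonneg powr_mono2)
    qed
    fix i j assume "i \<in> U" "j \<in> U" "i \<noteq> j"
    with card assms(1) show "(gpow signed \<gamma> (A i j) - gpow signed \<gamma> (B i j)) * (gpow signed \<gamma> (A i j) - gpow signed \<gamma> (B i j))
        \<le> (gpow signed \<gamma> (A i i) - gpow signed \<gamma> (B i i)) * (gpow signed \<gamma> (A j j) - gpow signed \<gamma> (B j j))"
      by (auto simp: card_le_Suc0_iff_eq)
  qed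
next
  case False
  have "psd_on U (\<lambda>i j. gpow signed \<gamma> (B i j + (A i j - B i j)) - gpow signed \<gamma> (B i j))"
  proof (rule psd_on_gpow_add_diff[OF assms(1) _ assms(3)])
    show "1 \<le> \<gamma>" using False by simp
    show "B i j = B j i" if "i \<in> U" "j \<in> U" for i j using psd_on_sym[OF assms(2) that] .
    fix l :: real assume "l \<in> {0..1}"
    then have "psd_on U (\<lambda>i j. B i j + l * (A i j - B i j))"
      by (intro psd_on_add[OF assms(2)] psd_on_scale[OF assms(3)]) simp
    then show "psd_on U (\<lambda>i j. gpow (\<not> signed) (\<gamma> - 1) (B i j + l * (A i j - B i j)))"
      by (rule psd_on_gpow[OF assms(1)]) (use False assms(5) in simp_all)
  qed
  then show ?thesis by simp
qed

lemma psd_on_gpow_superadditive: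
  assumes "finite U" "psd_on U A" "psd_on U B" "real (card U) \<le> \<beta>"
  shows "psd_on U (\<lambda>i j. gpow signed \<beta> (A i j + B i j) - gpow signed \<beta> (A i j) - gpow signed \<beta> (B i j))"
proof (cases "U = {}")
  case True
  then show ?thesis by (simp add: psd_on_empty)
next
  case False
  then have "1 \<le> real (card U)" using assms(1) by (simp add: Suc_le_eq card_gt_0_iff)
  with assms(4) have \<beta>: "1 \<le> \<beta>" by linarith
  show ?thesis
  proof (rule psd_onI)
    let ?g = "gpow (\<not> signed) (\<beta> - 1)"
    show "gpow signed \<beta> (A i j + B i j) - gpow signed \<beta> (A i j) - gpow signed \<beta> (B i j) =
        gpow signed \<beta> (A j i + B j i) - gpow signed \<beta> (A j i) - gpow signed \<beta> (B j i)"
      if "i \<in> U" "j \<in> U" for i j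
      using psd_on_sym[OF assms(2) that] psd_on_sym[OF assms(3) that] by simp
    fix v
    show "0 \<le> quad_form U (\<lambda>i j. gpow signed \<beta> (A i j + B i j) - gpow signed \<beta> (A i j) - gpow signed \<beta> (B i j)) v"
    proof (rule quad_form_nonneg_integral_schur_product[OF assms(1,3)])
      \<comment> \<open>Differentiate \<open>l \<mapsto> f(A + l B) - f(l B)\<close>: the derivative is \<open>B\<close> times a monotonicity defect.\<close>
      show "psd_on U (\<lambda>i j. \<beta> * (?g (A i j + l * B i j) - ?g (l * B i j)))" if "l \<in> {0..1}" for l
      proof (rule psd_on_scale)
        have "psd_on U (\<lambda>i j. l * B i j)" using that by (intro psd_on_scale[OF assms(3)]) simp
        moreover have "psd_on U (\<lambda>i j. (A i j + l * B i j) - l * B i j)" using assms(2) by simp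
        ultimately show "psd_on U (\<lambda>i j. ?g (A i j + l * B i j) - ?g (l * B i j))"
          by (rule psd_on_gpow_mono[OF assms(1)]) (use \<beta> assms(4) in simp_all)
      qed (use \<beta> in simp)
      show "((\<lambda>l. B i j * (\<beta> * (?g (A i j + l * B i j) - ?g (l * B i j)))) has_integral
          gpow signed \<beta> (A i j + B i j) - gpow signed \<beta> (A i j) - gpow signed \<beta> (B i j)) {0..1}" for i j
        using has_integral_diff[OF gpow_add_has_integral[OF \<beta>, of "B i j" signed "A i j"]
            gpow_add_has_integral[OF \<beta>, of "B i j" signed 0]]
        by (simp add: algebra_simps)
    qed
  qed
qed

section \<open>Clique sums\<close>

lemma psd_on_cong:
  "psd_on U M \<Longrightarrow> (\<And>i j. i \<in> U \<Longrightarrow> j \<in> U \<Longrightarrow> M i j = N i j) \<Longrightarrow> psd_on U N"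
  unfolding psd_on_def by simp

lemma psd_on_zero_ext:
  assumes "finite U" "X \<subseteq> U" "psd_on X N"
  shows "psd_on U (\<lambda>i j. if i \<in> X \<and> j \<in> X then N i j else 0)"
proof (rule psd_onI)
  show "(if i \<in> X \<and> j \<in> X then N i j else 0) = (if j \<in> X \<and> i \<in> X then N j i else 0)" for i j
    using psd_on_sym[OF assms(3)] by auto
  show "0 \<le> quad_form U (\<lambda>i j. if i \<in> X \<and> j \<in> X then N i j else 0) v" for v
    unfolding quad_form_zero_ext[OF assms(1,2)] by (rule psd_on_quad_form_nonneg[OF assms(3)])
qed

lemma PG_clique_sum_split:
  assumes fin: "finite (X \<union> Y)" and comp: "complete_on E (X \<inter> Y)"
    and noedge: "\<And>a c. a \<in> X - Y \<Longrightarrow> c \<in> Y - X \<Longrightarrow> \<not> E a c"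
    and M: "M \<in> PG E (X \<union> Y)"
  obtains M1 M2 where "M1 \<in> PG E X" "M2 \<in> PG E Y"
    and "\<And>i j. i \<in> X \<union> Y \<Longrightarrow> j \<in> X \<union> Y \<Longrightarrow> M i j = M1 i j + M2 i j"
    and "\<And>i j. i \<in> X \<union> Y \<Longrightarrow> j \<in> X \<union> Y \<Longrightarrow> i \<notin> X \<or> j \<notin> X \<Longrightarrow> M1 i j = 0"
    and "\<And>i j. i \<in> X \<union> Y \<Longrightarrow> j \<in> X \<union> Y \<Longrightarrow> i \<notin> Y \<or> j \<notin> Y \<Longrightarrow> M2 i j = 0"
proof -
  let ?U = "X \<union> Y"
  have Mpsd: "psd_on ?U M"
    and Mz: "\<And>i j. i \<in> ?U \<Longrightarrow> j \<in> ?U \<Longrightarrow> i \<noteq> j \<Longrightarrow> \<not> E i j \<Longrightarrow> M i j = 0"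
    using M unfolding PG_def by auto
  have "M i j = 0" if "i \<in> X - Y" "j \<in> Y - X" for i j
    using Mz noedge that by blast
  then obtain M1 where M1: "psd_on ?U M1" and M2: "psd_on ?U (\<lambda>i j. M i j - M1 i j)"
    and onXY: "\<And>i j. i \<in> X - Y \<Longrightarrow> j \<in> ?U \<Longrightarrow> M1 i j = M i j"
    and onYX: "\<And>i j. i \<in> Y - X \<Longrightarrow> j \<in> ?U \<Longrightarrow> M1 i j = 0"
    using psd_on_split_rows[OF fin Mpsd, of "X - Y" "Y - X"] by blast
  define M2 where "M2 = (\<lambda>i j. M i j - M1 i j)"
  have sym: "M i j = M j i" "M1 i j = M1 j i" if "i \<in> ?U" "j \<in> ?U" for i j
    using psd_on_sym[OF Mpsd that] psd_on_sym[OF M1 that] by simp_all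
  have M1_outside: "M1 i j = 0" if "i \<in> ?U" "j \<in> ?U" "i \<notin> X \<or> j \<notin> X" for i j
    using that onYX sym(2)[OF that(1,2)] by auto
  have M2_outside: "M2 i j = 0" if "i \<in> ?U" "j \<in> ?U" "i \<notin> Y \<or> j \<notin> Y" for i j
    using that onXY sym[OF that(1,2)] by (auto simp: M2_def)
  \<comment> \<open>Off the separator each of \<open>M1\<close>, \<open>M2\<close> agrees with \<open>M\<close> or vanishes; on it \<open>E\<close> is complete.\<close>
  have "M1 \<in> PG E X"
  proof -
    have "M1 i j = 0" if "i \<in> X" "j \<in> X" "i \<noteq> j" "\<not> E i j" for i j
    proof (cases "i \<in> Y \<and> j \<in> Y")
      case True
      with comp that show ?thesis by (auto simp: complete_on_def)
    next
      case False
      then have "M1 i j = M i j" using that onXY sym by (metis DiffI UnCI)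
      with Mz that show ?thesis by simp
    qed
    then show ?thesis using psd_on_subset[OF fin _ M1] by (auto simp: PG_def)
  qed
  moreover have "M2 \<in> PG E Y"
  proof -
    have "M2 i j = 0" if "i \<in> Y" "j \<in> Y" "i \<noteq> j" "\<not> E i j" for i j
    proof (cases "i \<in> X \<and> j \<in> X")
      case True
      with comp that show ?thesis by (auto simp: complete_on_def)
    next
      case False
      then have "M2 i j = M i j" using that M1_outside by (auto simp: M2_def)
      with Mz that show ?thesis by simp
    qed
    then show ?thesis using psd_on_subset[OF fin _ M2] by (auto simp: PG_def M2_def[symmetric])
  qed
  ultimately show ?thesis
    using that M1_outside M2_outside by (auto simp: M2_def)
qed

theorem preserves_positivity_clique_sum:
  assumes fin: "finite (X \<union> Y)" and comp: "complete_on E (X \<inter> Y)"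
    and noedge: "\<And>a c. a \<in> X - Y \<Longrightarrow> c \<in> Y - X \<Longrightarrow> \<not> E a c"
    and f0: "f 0 = 0"
    and superadd: "\<And>A B. psd_on (X \<inter> Y) A \<Longrightarrow> psd_on (X \<inter> Y) B \<Longrightarrow>
      psd_on (X \<inter> Y) (\<lambda>i j. f (A i j + B i j) - f (A i j) - f (B i j))"
    and "preserves_positivity f E X" "preserves_positivity f E Y"
  shows "preserves_positivity f E (X \<union> Y)"
  unfolding preserves_positivity_def
proof
  let ?U = "X \<union> Y"
  fix M assume M: "M \<in> PG E ?U"
  obtain M1 M2 where M1: "M1 \<in> PG E X" and M2: "M2 \<in> PG E Y"
    and sum: "\<And>i j. i \<in> ?U \<Longrightarrow> j \<in> ?U \<Longrightarrow> M i j = M1 i j + M2 i j"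
    and M1z: "\<And>i j. i \<in> ?U \<Longrightarrow> j \<in> ?U \<Longrightarrow> i \<notin> X \<or> j \<notin> X \<Longrightarrow> M1 i j = 0"
    and M2z: "\<And>i j. i \<in> ?U \<Longrightarrow> j \<in> ?U \<Longrightarrow> i \<notin> Y \<or> j \<notin> Y \<Longrightarrow> M2 i j = 0"
    using PG_clique_sum_split[OF fin comp noedge M] by blast
  have finX: "finite X" and finY: "finite Y" using fin by simp_all
  have fM1: "psd_on X (\<lambda>i j. f (M1 i j))" and fM2: "psd_on Y (\<lambda>i j. f (M2 i j))"
    using M1 M2 assms(6,7) by (auto simp: preserves_positivity_def PG_def entrywise_def)
  have "psd_on (X \<inter> Y) M1" "psd_on (X \<inter> Y) M2"
    using psd_on_subset[OF finX, of "X \<inter> Y" M1] psd_on_subset[OF finY, of "X \<inter> Y" M2] M1 M2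
    by (auto simp: PG_def)
  then have D: "psd_on (X \<inter> Y) (\<lambda>i j. f (M1 i j + M2 i j) - f (M1 i j) - f (M2 i j))"
    by (rule superadd)
  have "psd_on ?U (\<lambda>i j. (if i \<in> X \<and> j \<in> X then f (M1 i j) else 0) +
      (if i \<in> Y \<and> j \<in> Y then f (M2 i j) else 0) +
      (if i \<in> X \<inter> Y \<and> j \<in> X \<inter> Y then f (M1 i j + M2 i j) - f (M1 i j) - f (M2 i j) else 0))"
    by (intro psd_on_add psd_on_zero_ext[OF fin _ fM1] psd_on_zero_ext[OF fin _ fM2]
        psd_on_zero_ext[OF fin _ D]) auto
  moreover have "(if i \<in> X \<and> j \<in> X then f (M1 i j) else 0) +
      (if i \<in> Y \<and> j \<in> Y then f (M2 i j) else 0) +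
      (if i \<in> X \<inter> Y \<and> j \<in> X \<inter> Y then f (M1 i j + M2 i j) - f (M1 i j) - f (M2 i j) else 0)
      = f (M i j)" if ij: "i \<in> ?U" "j \<in> ?U" for i j
  proof -
    consider "i \<in> X \<and> j \<in> X \<and> i \<in> Y \<and> j \<in> Y" | "i \<notin> X \<or> j \<notin> X" | "i \<notin> Y \<or> j \<notin> Y"
      by blast
    then show ?thesis
    proof cases
      case 1
      then show ?thesis using sum[OF ij] by simp
    next
      case 2
      then have "M1 i j = 0" by (rule M1z[OF ij])
      moreover have "M2 i j = 0" if "i \<notin> Y \<or> j \<notin> Y" using M2z[OF ij that] .
      ultimately show ?thesis using 2 sum[OF ij] f0 by auto
    next
      case 3
      then have "M2 i j = 0" by (rule M2z[OF ij])
      moreover have "M1 i j = 0" if "i \<notin> X \<or> j \<notin> X" using M1z[OF ij that] .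
      ultimately show ?thesis using 3 sum[OF ij] f0 by auto
    qed
  qed
  ultimately have "psd_on ?U (\<lambda>i j. f (M i j))"
    by (rule psd_on_cong)
  moreover have "f (M i j) = 0" if "i \<in> ?U" "j \<in> ?U" "i \<noteq> j" "\<not> E i j" for i j
    using M that f0 by (simp add: PG_def)
  ultimately show "entrywise f M \<in> PG E ?U"
    by (simp add: PG_def entrywise_def)
qed

section \<open>Perfect orderings of prime components\<close>

lemma prime_comps_Union: "prime_comps E U P \<Longrightarrow> \<Union>P = U"
  by (induction rule: prime_comps.induct) (auto simp: decomposition_def)

lemma decomposition_no_edge:
  assumes "decomposition E U A C B" "a \<in> A" "b \<in> B"
  shows "\<not> E a b"
proof
  assume "E a b"
  have meets: "\<And>p. is_path E U p \<Longrightarrow> hd p \<in> A \<Longrightarrow> last p \<in> B \<Longrightarrow> set p \<inter> C \<noteq> {}"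
    and parts: "A \<union> C \<union> B = U" "A \<inter> C = {}" "A \<inter> B = {}" "C \<inter> B = {}"
    using assms(1) by (auto simp: decomposition_def)
  have "is_path E U [a, b]"
    using parts assms(2,3) \<open>E a b\<close> by (auto simp: is_path_def less_Suc_eq)
  from meets[OF this] assms(2,3) parts show False by auto
qed

lemma prime_comps_edge:
  assumes "prime_comps E U P" "\<forall>x\<in>U. \<forall>y\<in>U. E x y \<longrightarrow> E y x"
    and "x \<in> U" "y \<in> U" "E x y"
  shows "\<exists>Q\<in>P. x \<in> Q \<and> y \<in> Q"
  using assms
proof (induction arbitrary: x y rule: prime_comps.induct)
  case (prime U)
  then show ?case by auto
next
  case (decomp U A C B P1 P2)
  have parts: "U = (A \<union> C) \<union> (B \<union> C)" "A \<inter> B = {}"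
    using decomp.hyps(1) by (auto simp: decomposition_def)
  have "\<not> (x \<in> A \<and> y \<in> B)" "\<not> (x \<in> B \<and> y \<in> A)"
    using decomposition_no_edge[OF decomp.hyps(1)] decomp.prems by blast+
  then consider "x \<in> A \<union> C" "y \<in> A \<union> C" | "x \<in> B \<union> C" "y \<in> B \<union> C"
    using decomp.prems(2,3) parts by blast
  then show ?case
  proof cases
    case 1
    have "\<forall>x\<in>A \<union> C. \<forall>y\<in>A \<union> C. E x y \<longrightarrow> E y x" using decomp.prems(1) parts(1) by blast
    from decomp.IH(1)[OF this 1 decomp.prems(4)] show ?thesis by blast
  next
    case 2
    have "\<forall>x\<in>B \<union> C. \<forall>y\<in>B \<union> C. E x y \<longrightarrow> E y x" using decomp.prems(1) parts(1) by blast
    from decomp.IH(2)[OF this 2 decomp.prems(4)] show ?thesis by blast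
  qed
qed

lemma UN_nth_eq_Union_set: "(\<Union>j<length xs. xs ! j) = \<Union>(set xs)"
  unfolding set_conv_nth by blast

lemma perfect_ordering_no_edge:
  assumes comps: "prime_comps E V (set Bs)" and sym: "\<forall>x\<in>V. \<forall>y\<in>V. E x y \<longrightarrow> E y x"
    and po: "perfect_ordering E Bs" and n: "n < length Bs"
    and a: "a \<in> (\<Union>j<n. Bs ! j) - Bs ! n" and c: "c \<in> Bs ! n - (\<Union>j<n. Bs ! j)"
  shows "\<not> E a c"
proof
  assume "E a c"
  let ?P = "\<lambda>m. m < length Bs \<and> a \<in> Bs ! m \<and> c \<in> Bs ! m"
  have V: "\<Union>(set Bs) = V" by (rule prime_comps_Union[OF comps])
  have "a \<in> V" "c \<in> V" using a c n V by (auto simp: UN_nth_eq_Union_set[symmetric])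
  then obtain Q where "Q \<in> set Bs" "a \<in> Q" "c \<in> Q"
    using prime_comps_edge[OF comps sym _ _ \<open>E a c\<close>] by blast
  then have "\<exists>m. ?P m" by (auto simp: in_set_conv_nth)
  \<comment> \<open>The first component containing the edge lies after \<open>Bs ! n\<close>, so the edge lies in its
    separator, hence in an earlier component: a contradiction.\<close>
  then obtain m where m: "?P m" and least: "\<And>m'. m' < m \<Longrightarrow> \<not> ?P m'"
    using exists_least_iff[of ?P] by blast
  have "n < m"
  proof (rule ccontr)
    assume "\<not> n < m"
    then consider "m < n" | "m = n" by linarith
    then show False
      by cases (use m a c in auto)
  qed
  then have "a \<in> sep Bs m" "c \<in> sep Bs m"
    using m a c by (auto simp: sep_def)
  moreover have "0 < m" using \<open>n < m\<close> by simp
  with po m obtain j where "j < m" "sep Bs m \<subseteq> Bs ! j"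
    unfolding perfect_ordering_def by blast
  ultimately show False
    using least[of j] m by auto
qed

theorem preserves_positivity_perfect_ordering:
  assumes graph: "simple_graph V E" and comps: "prime_comps E V (set Bs)"
    and po: "perfect_ordering E Bs" and f0: "f 0 = 0"
    and comp_pos: "\<And>i. i < length Bs \<Longrightarrow> preserves_positivity f E (Bs ! i)"
    and superadd: "\<And>i A B. i < length Bs \<Longrightarrow> psd_on (sep Bs i) A \<Longrightarrow> psd_on (sep Bs i) B \<Longrightarrow>
      psd_on (sep Bs i) (\<lambda>k l. f (A k l + B k l) - f (A k l) - f (B k l))"
  shows "preserves_positivity f E V"
proof -
  have V: "\<Union>(set Bs) = V" by (rule prime_comps_Union[OF comps])
  have fin: "finite V" and sym: "\<forall>x\<in>V. \<forall>y\<in>V. E x y \<longrightarrow> E y x"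
    using graph by (auto simp: simple_graph_def)
  have "preserves_positivity f E (\<Union>j<n. Bs ! j)" if "n \<le> length Bs" for n
    using that
  proof (induction n)
    case 0
    show ?case by (simp add: preserves_positivity_def PG_def psd_on_def)
  next
    case (Suc n)
    then have n: "n < length Bs" by simp
    have "preserves_positivity f E ((\<Union>j<n. Bs ! j) \<union> Bs ! n)"
    proof (rule preserves_positivity_clique_sum)
      have "(\<Union>j<n. Bs ! j) \<union> Bs ! n \<subseteq> V" using n V by (auto simp: UN_nth_eq_Union_set[symmetric])
      then show "finite ((\<Union>j<n. Bs ! j) \<union> Bs ! n)" using fin finite_subset by blast
      show "complete_on E ((\<Union>j<n. Bs ! j) \<inter> Bs ! n)"
        using po n by (simp add: perfect_ordering_def sep_def)
      show "\<not> E a c" if "a \<in> (\<Union>j<n. Bs ! j) - Bs ! n" "c \<in> Bs ! n - (\<Union>j<n. Bs ! j)" for a c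
        by (rule perfect_ordering_no_edge[OF comps sym po n that])
      show "psd_on ((\<Union>j<n. Bs ! j) \<inter> Bs ! n) (\<lambda>i j. f (A i j + B i j) - f (A i j) - f (B i j))"
        if "psd_on ((\<Union>j<n. Bs ! j) \<inter> Bs ! n) A" "psd_on ((\<Union>j<n. Bs ! j) \<inter> Bs ! n) B" for A B
        using superadd[OF n] that by (simp add: sep_def)
    qed (use f0 comp_pos n Suc in simp_all)
    then show ?case by (simp add: lessThan_Suc Un_commute)
  qed
  from this[of "length Bs"] show ?thesis
    by (simp add: UN_nth_eq_Union_set V)
qed

theorem corollary4p2:
  fixes V :: "nat set" and E :: "nat \<Rightarrow> nat \<Rightarrow> bool" and Bs :: "nat set list"
    and \<alpha> :: real and f :: "real \<Rightarrow> real"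
  assumes "simple_graph V E"
    and "prime_comps E V (set Bs)" and "distinct Bs"
    and "perfect_ordering E Bs"
    and "\<alpha> > 0"
    and "f = psi \<alpha> \<or> f = phi \<alpha>"
    and "\<forall>i<length Bs. preserves_positivity f E (Bs ! i)"
    and "\<forall>i<length Bs. \<alpha> \<ge> real (card (sep Bs i))"
  shows "preserves_positivity f E V"
proof -
  obtain signed where f: "f = gpow signed \<alpha>"
    using assms(6) psi_eq_gpow phi_eq_gpow by blast
  have finite_sep: "finite (sep Bs i)" if "i < length Bs" for i
  proof -
    have "sep Bs i \<subseteq> V"
      using prime_comps_Union[OF assms(2)] that by (auto simp: sep_def)
    then show ?thesis using assms(1) finite_subset by (auto simp: simple_graph_def)
  qed
  show ?thesis
  proof (rule preserves_positivity_perfect_ordering[OF assms(1,2,4)])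
    show "psd_on (sep Bs i) (\<lambda>k l. f (A k l + B k l) - f (A k l) - f (B k l))"
      if "i < length Bs" "psd_on (sep Bs i) A" "psd_on (sep Bs i) B" for i A B
      unfolding f using psd_on_gpow_superadditive[OF finite_sep that(2,3)] assms(8) that(1) by blast
  qed (use assms(7) f in simp_all)
qed

end
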